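(* Let $m,n\ge 2$ and let $W$ be a channel from $\{1,\dots,m\}$ to $\{1,\dots,n\}$. Let $g=\max_{1\le j\le n}(\mathbf{1}W)_j$. Then $\underline{P}_W(1)=(g-m+1)_+$. If $\underline{P}_W(1)>0$ or $m=2$ or $n=2$, then $\overline{C}_{11}(W)=1-\underline{P}_W(1)$; otherwise \[ \log_2\gamma\le \overline{C}_{11}(W)\le \log_2(o-1)+\overline{P}_W(o)\log_2\frac{o}{o-1}, \] where $o=m\wedge n$, $a=\lfloor\mathbf{1}W\rfloor$, $b=\lceil \mathbf{1}W\rceil$ (entrywise), and $\gamma=\mathrm{w}(a)+\big(m-\sum_{j\in\mathrm{supp}(a)}b_j\big)_+$. Moreover, if $m\le n$ and $\mathbf{1}W\le\mathbf{1}'$ entrywise then $\overline{C}_{11}(W)=\log_2 m$, and if $m\ge n$ and $\mathbf{1}W\ge \mathbf{1}'$ entrywise then $\overline{C}_{11}(W)=\log_2 n$, where $\mathbf{1}'$ is the all-one vector of length $n$.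
   Context: A channel from $\mathcal{X}=\{1,\dots,m\}$ to $\mathcal{Y}=\{1,\dots,n\}$ is an $m\times n$ row-stochastic matrix $W=(W_{x,y})$. A deterministic channel is a channel whose entries are all $0$ or $1$ (identified with a map $\mathcal{X}\to\mathcal{Y}$). $\mathcal{D}$ is the set of all deterministic channels, $\mathrm{rank}(D)$ is the matrix rank. $\Lambda(W)=\{\lambda \text{ probability distribution on }\mathcal{D}: W=\sum_{D}\lambda_D D\}$. $C_{11}(\lambda)=\sum_D\lambda_D\log_2\mathrm{rank}(D)$ and $\overline{C}_{11}(W)=\sup\{C_{11}(\lambda):\lambda\in\Lambda(W)\}$. $P_\lambda(r)=\lambda(\{D:\mathrm{rank}(D)=r\})$, $\underline{P}_W(r)=\min_{\lambda\in\Lambda(W)}P_\lambda(r)$, $\overline{P}_W(r)=\max_{\lambda\in\Lambda(W)}P_\lambda(r)$. $\mathbf{1}$ is the all-one row vector of length $m$ (so $\mathbf{1}W$ is the vector of column sums). $\mathrm{w}(a)$ is the number of nonzero entries of $a$, $\mathrm{supp}(a)$ the set of indices of nonzero entries, $(x)_+=\max(x,0)$, $x\wedge y=\min(x,y)$. *)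

theory Defs
  imports "HOL-Analysis.Analysis"
begin

text \<open>Input alphabet = type 'm (m = CARD('m)), output alphabet = type 'n (n = CARD('n)).
  A channel is an m x n row-stochastic real matrix.\<close>

definition is_channel :: "real^'n^'m \<Rightarrow> bool" where
  "is_channel W \<longleftrightarrow> (\<forall>x y. W $ x $ y \<ge> 0) \<and> (\<forall>x. (\<Sum>y\<in>UNIV. W $ x $ y) = 1)"

definition det_channels :: "(real^'n^'m) set" where
  "det_channels = {D. is_channel D \<and> (\<forall>x y. D $ x $ y = 0 \<or> D $ x $ y = 1)}"

definition Lambda :: "real^'n^'m \<Rightarrow> (real^'n^'m \<Rightarrow> real) set" where
  "Lambda W = {lam. (\<forall>D. lam D \<ge> 0) \<and> (\<forall>D. D \<notin> det_channels \<longrightarrow> lam D = 0)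
                  \<and> (\<Sum>D\<in>det_channels. lam D) = 1
                  \<and> W = (\<Sum>D\<in>det_channels. lam D *\<^sub>R D)}"

definition C11 :: "(real^'n^'m \<Rightarrow> real) \<Rightarrow> real" where
  "C11 lam = (\<Sum>D\<in>(det_channels :: (real^'n^'m) set). lam D * log 2 (real (rank D)))"

definition C11_bar :: "real^'n^'m \<Rightarrow> real" where
  "C11_bar W = Sup (C11 ` Lambda W)"

definition P_lam :: "(real^'n^'m \<Rightarrow> real) \<Rightarrow> nat \<Rightarrow> real" where
  "P_lam lam r = (\<Sum>D\<in>{D\<in>(det_channels :: (real^'n^'m) set). rank D = r}. lam D)"

definition P_lower :: "real^'n^'m \<Rightarrow> nat \<Rightarrow> real" where
  "P_lower W r = Inf ((\<lambda>lam. P_lam lam r) ` Lambda W)"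

definition P_upper :: "real^'n^'m \<Rightarrow> nat \<Rightarrow> real" where
  "P_upper W r = Sup ((\<lambda>lam. P_lam lam r) ` Lambda W)"

definition colsum :: "real^'n^'m \<Rightarrow> 'n \<Rightarrow> real" where
  "colsum W j = (\<Sum>x\<in>UNIV. W $ x $ j)"

definition gamma :: "real^'n^'m \<Rightarrow> real" where
  "gamma W = (let a = (\<lambda>j. \<lfloor>colsum W j\<rfloor>); b = (\<lambda>j. \<lceil>colsum W j\<rceil>);
                  S = {j. a j \<noteq> 0}
              in real (card S) + max 0 (real CARD('m) - real_of_int (\<Sum>j\<in>S. b j)))"

end

theory Submission
  imports Defs
begin

(*
  Every channel W is a mixture of deterministic channels, i.e. of maps f, whose fibre sizes
  |f^-1(j)| all lie between the floor and the ceiling of the column sums (1W)_j. This is an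
  iterative rounding: while some entry of W is fractional, there are more fractional entries
  than row constraints and constraints of integral columns, so some nonzero D supported on the
  fractional entries has zero row sums and leaves the integral column sums fixed. Moving from W
  along D and along -D until a new entry or column sum becomes integral writes W as a convex
  combination of two channels with fewer fractional positions.

  The rank of the deterministic channel of f is |range f|, and |f^-1(j)| + |range f| <= m + 1.
  Averaging over an arbitrary decomposition gives P(1) >= (1W)_j - m + 1 and, as
  log2 r <= r - 1, C11 <= m - (1W)_j. For a rounding decomposition the fibre bounds pin down
  P(1), force all ranks to be at least gamma, and force injective (surjective) maps when
  1W <= 1 (1W >= 1).
*)

section \<open>Deterministic channels as maps\<close>

lemma colsum_add: "colsum (A + B) j = colsum A j + colsum B j"
  by (simp add: colsum_def sum.distrib)

lemma colsum_scaleR: "colsum (c *\<^sub>R A) j = c * colsum A j"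
  by (simp add: colsum_def sum_distrib_left)

lemma Max_colsum_attained: "\<exists>j. Max (range (colsum W)) = colsum W j"
proof -
  have "Max (range (colsum W)) \<in> range (colsum W)" by (rule Max_in) auto
  then show ?thesis by blast
qed

lemma sum_colsum: "(\<Sum>j\<in>UNIV. colsum A j) = (\<Sum>x\<in>UNIV. \<Sum>y\<in>UNIV. A $ x $ y)"
  unfolding colsum_def by (rule sum.swap)

definition det_channel :: "('m \<Rightarrow> 'n) \<Rightarrow> real^'n^'m" where
  "det_channel f = (\<chi> x y. if f x = y then 1 else 0)"

lemma det_channel_nth [simp]: "det_channel f $ x $ y = (if f x = y then 1 else 0)"
  by (simp add: det_channel_def)

lemma inj_det_channel: "inj det_channel"
proof
  fix f g :: "'m::finite \<Rightarrow> 'n::finite" assume eq: "det_channel f = det_channel g"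
  have "g x = f x" for x
  proof (rule ccontr)
    assume "g x \<noteq> f x"
    then have "det_channel f $ x $ f x = 0" using eq by simp
    then show False by simp
  qed
  then show "f = g" by auto
qed

lemma det_channels_eq_range: "det_channels = range det_channel"
proof
  show "range det_channel \<subseteq> det_channels"
    by (auto simp: det_channels_def is_channel_def)
next
  show "det_channels \<subseteq> range det_channel"
  proof
    fix D :: "real^'n^'m" assume D: "D \<in> det_channels"
    have "\<exists>!y. D $ x $ y = 1" for x
    proof -
      have "(\<Sum>y\<in>UNIV. D $ x $ y) = (\<Sum>y\<in>UNIV. if D $ x $ y = 1 then 1 else 0)"
        using D by (intro sum.cong) (auto simp: det_channels_def)
      also have "\<dots> = card {y. D $ x $ y = 1}" by (simp add: sum.If_cases)
      finally have "(\<Sum>y\<in>UNIV. D $ x $ y) = card {y. D $ x $ y = 1}" .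
      then have "card {y. D $ x $ y = 1} = 1" using D by (simp add: det_channels_def is_channel_def)
      then obtain y1 where "{y. D $ x $ y = 1} = {y1}" by (rule card_1_singletonE)
      then show ?thesis by (auto simp: set_eq_iff)
    qed
    then obtain f where f: "\<And>x. D $ x $ f x = 1" and uniq: "\<And>x y. D $ x $ y = 1 \<Longrightarrow> y = f x"
      by metis
    have "D $ x $ y = det_channel f $ x $ y" for x y
    proof (cases "y = f x")
      case False
      then have "D $ x $ y \<noteq> 1" using uniq by blast
      then show ?thesis using D False by (auto simp: det_channels_def)
    qed (simp add: f)
    then have "D = det_channel f" by (simp add: vec_eq_iff)
    then show "D \<in> range det_channel" by simp
  qed
qed

lemma finite_det_channels: "finite det_channels"
  by (simp add: det_channels_eq_range)

lemma sum_det_channels: "(\<Sum>D\<in>det_channels. h D) = (\<Sum>f\<in>UNIV. h (det_channel f))"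
  by (simp add: det_channels_eq_range sum.reindex[OF inj_det_channel])

lemma colsum_det_channel: "colsum (det_channel f) j = card {x. f x = j}"
  by (simp add: colsum_def sum.If_cases)

lemma rank_det_channel: "rank (det_channel f) = card (range f)"
proof -
  have "row x (det_channel f) = axis (f x) 1" for x
    by (simp add: row_def axis_def vec_eq_iff)
  then have "rows (det_channel f) = (\<lambda>y. axis y (1::real)) ` range f"
    by (auto simp: rows_def)
  moreover have "independent ((\<lambda>y. axis y (1::real)) ` range f)"
    by (rule independent_mono[OF independent_Basis]) (auto simp: Basis_vec_def)
  ultimately have "rank (det_channel f) = card ((\<lambda>y. axis y (1::real)) ` range f)"
    unfolding row_rank_def by (simp add: dim_eq_card_independent)
  also have "\<dots> = card (range f)"
    by (rule card_image) (auto simp: inj_on_def axis_eq_axis)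
  finally show ?thesis .
qed

section \<open>Fibres and images of maps\<close>

lemma card_range_ge_1: "1 \<le> card (range (f :: 'm::finite \<Rightarrow> 'n))"
  by (simp add: Suc_le_eq card_gt_0_iff)

lemma card_range_le_CARD_dom: "card (range (f :: 'm::finite \<Rightarrow> 'n)) \<le> CARD('m)"
  by (rule card_image_le) simp

lemma card_range_le_CARD_codom: "card (range (f :: 'm \<Rightarrow> 'n::finite)) \<le> CARD('n)"
  by (rule card_mono) auto

lemma card_range_eq_1_iff: "card (range f) = 1 \<longleftrightarrow> (\<exists>c. \<forall>x. f x = c)"
  by (auto simp: card_1_singleton_iff)

lemma card_fiber_add_card_range_le:
  fixes f :: "'m::finite \<Rightarrow> 'n"
  shows "card {x. f x = j} + card (range f) \<le> CARD('m) + 1"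
proof -
  have "range f - {j} \<subseteq> f ` (UNIV - {x. f x = j})" by auto
  then have "card (range f - {j}) \<le> card (UNIV - {x. f x = j})"
    by (meson card_image_le card_mono finite_Diff finite_imageI finite order_trans)
  moreover have "card (UNIV - {x. f x = j}) = CARD('m) - card {x. f x = j}"
    by (simp add: card_Diff_subset)
  moreover have "card (range f) - 1 \<le> card (range f - {j})"
    by (simp add: card_Diff_singleton_if)
  moreover have "card {x. f x = j} \<le> CARD('m)" by (rule card_mono) auto
  ultimately show ?thesis by linarith
qed

lemma card_fiber_if_large:
  fixes f :: "'m::finite \<Rightarrow> 'n"
  assumes large: "CARD('m) \<le> card {x. f x = j} + 1" and "2 \<le> CARD('m)"
  shows "card {x. f x = j} + 1 = CARD('m) + (if card (range f) = 1 then 1 else 0)"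
proof (cases "card (range f) = 1")
  case True
  then obtain c where c: "\<And>x. f x = c" by (metis card_range_eq_1_iff)
  have "c = j"
  proof (rule ccontr)
    assume "c \<noteq> j"
    then have "card {x. f x = j} = 0" using c by simp
    then show False using large \<open>2 \<le> CARD('m)\<close> by linarith
  qed
  then have "{x. f x = j} = UNIV" using c by simp
  then show ?thesis using True by simp
next
  case False
  then have "2 \<le> card (range f)" using card_range_ge_1[of f] by linarith
  then have "card {x. f x = j} + 1 = CARD('m)"
    using card_fiber_add_card_range_le[of f j] large by linarith
  then show ?thesis using False by simp
qed

lemma card_range_eq_CARD_dom_if_fibers_le_1:
  fixes f :: "'m::finite \<Rightarrow> 'n"
  assumes "\<And>j. card {x. f x = j} \<le> 1"
  shows "card (range f) = CARD('m)"
proof -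
  have "inj f"
  proof (rule injI)
    fix x y assume "f x = f y"
    then have "{x, y} \<subseteq> {z. f z = f x}" by auto
    then have "card {x, y} \<le> card {z. f z = f x}" by (intro card_mono) simp_all
    also have "\<dots> \<le> 1" by (rule assms)
    finally show "x = y" by (cases "x = y") simp_all
  qed
  then show ?thesis by (simp add: card_image)
qed

lemma card_range_eq_CARD_codom_if_fibers_ge_1:
  fixes f :: "'m \<Rightarrow> 'n::finite"
  assumes "\<And>j. 1 \<le> card {x. f x = j}"
  shows "card (range f) = CARD('n)"
proof -
  have "j \<in> range f" for j
  proof -
    have "{x. f x = j} \<noteq> {}" using assms[of j] by (metis card.empty not_one_le_zero)
    then obtain x where "f x = j" by blast
    then show ?thesis by blast
  qed
  then have "range f = UNIV" by auto
  then show ?thesis by simp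
qed

lemma card_range_ge_gamma_bound:
  fixes f :: "'m::finite \<Rightarrow> 'n::finite" and c :: "'n \<Rightarrow> real"
  assumes c_nonneg: "\<And>j. 0 \<le> c j"
    and lo: "\<And>j. of_int \<lfloor>c j\<rfloor> \<le> real (card {x. f x = j})"
    and hi: "\<And>j. real (card {x. f x = j}) \<le> of_int \<lceil>c j\<rceil>"
  defines "S \<equiv> {j. \<lfloor>c j\<rfloor> \<noteq> 0}"
  shows "real (card S) + max 0 (real CARD('m) - real_of_int (\<Sum>j\<in>S. \<lceil>c j\<rceil>)) \<le> real (card (range f))"
proof -
  have "S \<subseteq> range f"
  proof
    fix j assume "j \<in> S"
    then have "0 \<le> \<lfloor>c j\<rfloor>" "\<lfloor>c j\<rfloor> \<noteq> 0" using c_nonneg[of j] by (simp_all add: S_def)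
    then have "1 \<le> \<lfloor>c j\<rfloor>" by linarith
    then have "(1::real) \<le> of_int \<lfloor>c j\<rfloor>" by linarith
    then have "card {x. f x = j} \<noteq> 0" using lo[of j] by linarith
    then have "{x. f x = j} \<noteq> {}" by auto
    then show "j \<in> range f" by auto
  qed
  have "card {x. f x = j} \<le> 1" if "j \<notin> S" for j
  proof -
    have "c j < 1" using that by (simp add: S_def floor_eq_iff)
    then have "\<lceil>c j\<rceil> \<le> 1" by (simp add: ceiling_le_iff)
    then show ?thesis using hi[of j] by linarith
  qed
  then have out: "real (card {x. f x = j}) = (if j \<in> range f then 1 else 0)" if "j \<notin> S" for j
    using that by (fastforce simp: le_Suc_eq card_eq_0_iff)
  have "real CARD('m) = (\<Sum>j\<in>UNIV. real (card {x. f x = j}))"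
    by (simp add: colsum_det_channel[symmetric] sum_colsum)
  also have "\<dots> = (\<Sum>j\<in>S. real (card {x. f x = j})) + (\<Sum>j\<in>UNIV - S. real (card {x. f x = j}))"
    by (simp add: sum.subset_diff[of S UNIV])
  also have "(\<Sum>j\<in>UNIV - S. real (card {x. f x = j})) = real (card (range f - S))"
    by (simp add: out sum.If_cases Diff_eq Int_commute)
  also have "(\<Sum>j\<in>S. real (card {x. f x = j})) \<le> real_of_int (\<Sum>j\<in>S. \<lceil>c j\<rceil>)"
    using hi by (simp add: sum_mono)
  finally have "real CARD('m) \<le> real_of_int (\<Sum>j\<in>S. \<lceil>c j\<rceil>) + real (card (range f - S))" by simp
  moreover have "card (range f) = card S + card (range f - S)"
    using \<open>S \<subseteq> range f\<close> by (simp add: card_Diff_subset card_mono)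
  ultimately show ?thesis by simp
qed

lemma log2_le_minus_1: "1 \<le> r \<Longrightarrow> log 2 (real r) \<le> real r - 1"
proof (induction r rule: nat_induct_at_least)
  case (Suc r)
  have "log 2 (real (Suc r)) \<le> log 2 (2 * real r)"
    using Suc.hyps by simp
  also have "\<dots> = 1 + log 2 (real r)" using Suc.hyps by (simp add: log_mult)
  finally show ?case using Suc.IH by simp
qed simp

section \<open>Decomposition into maps rounding the column sums\<close>

lemma channel_entry_le_1:
  assumes "is_channel W" shows "W $ x $ y \<le> 1"
proof -
  have "W $ x $ y \<le> (\<Sum>y'\<in>UNIV. W $ x $ y')"
    using assms by (intro member_le_sum) (auto simp: is_channel_def)
  then show ?thesis using assms by (simp add: is_channel_def)
qed

lemma integral_channel_in_det_channels:
  assumes W: "is_channel W" and "\<forall>x y. W $ x $ y \<in> \<int>"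
  shows "W \<in> det_channels"
proof -
  have "W $ x $ y = 0 \<or> W $ x $ y = 1" for x y
  proof -
    obtain k where k: "W $ x $ y = of_int k" using assms(2) Ints_cases by metis
    moreover have "0 \<le> W $ x $ y" "W $ x $ y \<le> 1"
      using W channel_entry_le_1 by (auto simp: is_channel_def)
    ultimately have "0 \<le> k" "k \<le> 1" by simp_all
    then have "k = 0 \<or> k = 1" by linarith
    then show ?thesis using k by auto
  qed
  then show ?thesis using W by (simp add: det_channels_def)
qed

lemma Lambda_nonneg: "lam \<in> Lambda W \<Longrightarrow> 0 \<le> lam D"
  by (simp add: Lambda_def)

lemma Lambda_point_mass:
  assumes "D \<in> det_channels"
  shows "(\<lambda>D'. if D' = D then 1 else 0) \<in> Lambda D"
proof -
  have "(\<Sum>D'\<in>det_channels. (if D' = D then 1 else 0) *\<^sub>R D') = (\<Sum>D'\<in>det_channels. if D' = D then D' else 0)"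
    by (rule sum.cong) auto
  then show ?thesis using assms by (simp add: Lambda_def finite_det_channels)
qed

lemma Lambda_convex:
  assumes "lam1 \<in> Lambda W1" "lam2 \<in> Lambda W2" "0 \<le> a" "0 \<le> b" "a + b = 1"
  shows "(\<lambda>D. a * lam1 D + b * lam2 D) \<in> Lambda (a *\<^sub>R W1 + b *\<^sub>R W2)"
  using assms
  by (simp add: Lambda_def sum.distrib scaleR_add_left scaleR_right.sum
      flip: sum_distrib_left scaleR_scaleR)

lemma card_non_Ints_ne_1:
  fixes f :: "'a \<Rightarrow> real"
  assumes "finite A" "sum f A \<in> \<int>"
  shows "card {a\<in>A. f a \<notin> \<int>} \<noteq> 1"
proof
  assume "card {a\<in>A. f a \<notin> \<int>} = 1"
  then obtain a where a: "{a\<in>A. f a \<notin> \<int>} = {a}" by (metis card_1_singletonE)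
  then have "a \<in> A" "f a \<notin> \<int>" by auto
  have "sum f (A - {a}) \<in> \<int>" using a by (intro Ints_sum) blast
  moreover have "f a = sum f A - sum f (A - {a})"
    using assms(1) \<open>a \<in> A\<close> by (simp add: sum.remove)
  ultimately show False using assms(2) \<open>f a \<notin> \<int>\<close> by (metis Ints_diff)
qed

lemma card_eq_sum_card_rows:
  fixes F :: "('a::finite \<times> 'b::finite) set"
  shows "card F = (\<Sum>x\<in>UNIV. card {y. (x, y) \<in> F})"
proof -
  have "F = (SIGMA x:UNIV. {y. (x, y) \<in> F})" by auto
  then show ?thesis by (metis card_SigmaI finite finite_UNIV)
qed

lemma card_eq_sum_card_cols:
  fixes F :: "('a::finite \<times> 'b::finite) set"
  shows "card F = (\<Sum>y\<in>UNIV. card {x. (x, y) \<in> F})"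
proof -
  have "card F = card (prod.swap ` F)" by (simp add: card_image)
  also have "\<dots> = (\<Sum>y\<in>UNIV. card {x. (x, y) \<in> F})"
    by (subst card_eq_sum_card_rows) simp
  finally show ?thesis .
qed

lemma card_rows_cols_le:
  fixes F :: "('a::finite \<times> 'b::finite) set" and N :: "'b set"
  assumes rows: "\<And>x. card {y. (x, y) \<in> F} \<noteq> 1"
    and cols: "\<And>y. y \<notin> N \<Longrightarrow> card {x. (x, y) \<in> F} \<noteq> 1"
    and N: "N \<subseteq> snd ` F"
  shows "2 * card (fst ` F) + 2 * card (snd ` F - N) + card N \<le> 2 * card F"
proof -
  have row2: "2 \<le> card {y. (x, y) \<in> F}" if "x \<in> fst ` F" for x
  proof -
    have "card {y. (x, y) \<in> F} \<noteq> 0" using that by (auto simp: card_eq_0_iff image_iff)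
    then show ?thesis using rows[of x] by linarith
  qed
  have col2: "2 \<le> card {x. (x, y) \<in> F}" if "y \<in> snd ` F - N" for y
  proof -
    have "card {x. (x, y) \<in> F} \<noteq> 0" "y \<notin> N" using that by (auto simp: card_eq_0_iff image_iff)
    then show ?thesis using cols[of y] by linarith
  qed
  have col1: "1 \<le> card {x. (x, y) \<in> F}" if "y \<in> N" for y
    using that N by (force simp: Suc_le_eq card_gt_0_iff)
  have "card (fst ` F) * 2 \<le> (\<Sum>x\<in>fst ` F. card {y. (x, y) \<in> F})"
    using sum_bounded_below[of "fst ` F" 2 "\<lambda>x. card {y. (x, y) \<in> F}"] row2 by simp
  also have "\<dots> \<le> (\<Sum>x\<in>UNIV. card {y. (x, y) \<in> F})" by (rule sum_mono2) auto
  finally have R: "2 * card (fst ` F) \<le> card F" by (simp flip: card_eq_sum_card_rows)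
  have "card (snd ` F - N) * 2 \<le> (\<Sum>y\<in>snd ` F - N. card {x. (x, y) \<in> F})"
    using sum_bounded_below[of "snd ` F - N" 2 "\<lambda>y. card {x. (x, y) \<in> F}"] col2 by simp
  moreover have "card N \<le> (\<Sum>y\<in>N. card {x. (x, y) \<in> F})"
    using sum_bounded_below[of N 1 "\<lambda>y. card {x. (x, y) \<in> F}"] col1 by simp
  moreover have "(\<Sum>y\<in>snd ` F - N. card {x. (x, y) \<in> F}) + (\<Sum>y\<in>N. card {x. (x, y) \<in> F})
      \<le> (\<Sum>y\<in>UNIV. card {x. (x, y) \<in> F})"
    using N by (subst sum.union_disjoint[symmetric]) (auto intro!: sum_mono2)
  ultimately show ?thesis using R card_eq_sum_card_cols[of F] by linarith
qed

lemma exists_vanishing_combination: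
  fixes v :: "'a \<Rightarrow> 'b::euclidean_space"
  assumes "finite F" "finite B" "v ` F \<subseteq> span B" "card B < card F"
  shows "\<exists>c. (\<forall>p. p \<notin> F \<longrightarrow> c p = 0) \<and> (\<exists>p. c p \<noteq> 0) \<and> (\<Sum>p\<in>F. c p *\<^sub>R v p) = 0"
proof (cases "inj_on v F")
  case False
  then obtain p q where pq: "p \<in> F" "q \<in> F" "p \<noteq> q" "v p = v q" by (auto simp: inj_on_def)
  define c where "c r = (if r = p then 1 else if r = q then -1 else 0 :: real)" for r
  have "(\<Sum>r\<in>F. c r *\<^sub>R v r) = (\<Sum>r\<in>{p, q}. c r *\<^sub>R v r)"
    using assms(1) pq by (intro sum.mono_neutral_right) (auto simp: c_def)
  also have "\<dots> = 0" using pq by (simp add: c_def)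
  finally show ?thesis using pq by (intro exI[of _ c]) (auto simp: c_def)
next
  case True
  have "dim (v ` F) \<le> card B" by (rule dim_le_card[OF assms(3,2)])
  then have "dependent (v ` F)"
    using assms(4) True by (intro dependent_biggerset_general) (simp add: card_image)
  then obtain u where u: "\<exists>w\<in>v ` F. u w \<noteq> 0" "(\<Sum>w\<in>v ` F. u w *\<^sub>R w) = 0"
    using assms(1) by (auto simp: dependent_finite)
  define c where "c p = (if p \<in> F then u (v p) else 0)" for p
  have "(\<Sum>p\<in>F. c p *\<^sub>R v p) = (\<Sum>w\<in>v ` F. u w *\<^sub>R w)"
    using True by (simp add: sum.reindex c_def)
  then show ?thesis using u by (intro exI[of _ c]) (auto simp: c_def)
qed

lemma sum_UNIV_pairs:
  fixes g :: "'a::finite \<times> 'b::finite \<Rightarrow> real"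
  shows "(\<Sum>p\<in>UNIV. g p) = (\<Sum>x\<in>UNIV. \<Sum>y\<in>UNIV. g (x, y))"
  by (simp add: sum.cartesian_product)

(* The coefficients of the entry p in the linear constraints "row x sums to 0" (index Inl x)
   and "column j sums to 0" (index Inr j), the latter imposed only for j in C. *)
definition constraint_vector :: "'n set \<Rightarrow> 'm::finite \<times> 'n::finite \<Rightarrow> real^('m + 'n)" where
  "constraint_vector C p = axis (Inl (fst p)) 1 + (if snd p \<in> C then axis (Inr (snd p)) 1 else 0)"

lemma sum_constraint_vector_Inl:
  fixes c :: "'m::finite \<times> 'n::finite \<Rightarrow> real"
  shows "(\<Sum>p\<in>UNIV. c p *\<^sub>R constraint_vector C p) $ Inl x = (\<Sum>y\<in>UNIV. c (x, y))"
proof -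
  have "(\<Sum>p\<in>UNIV. c p *\<^sub>R constraint_vector C p) $ Inl x = (\<Sum>p\<in>UNIV. if fst p = x then c p else 0)"
    by (auto simp: constraint_vector_def axis_def intro!: sum.cong)
  also have "\<dots> = (\<Sum>y\<in>UNIV. c (x, y))"
    by (simp add: sum_UNIV_pairs) (subst sum.swap, simp)
  finally show ?thesis .
qed

lemma sum_constraint_vector_Inr:
  fixes c :: "'m::finite \<times> 'n::finite \<Rightarrow> real"
  assumes "j \<in> C"
  shows "(\<Sum>p\<in>UNIV. c p *\<^sub>R constraint_vector C p) $ Inr j = (\<Sum>x\<in>UNIV. c (x, j))"
proof -
  have "(\<Sum>p\<in>UNIV. c p *\<^sub>R constraint_vector C p) $ Inr j = (\<Sum>p\<in>UNIV. if snd p = j then c p else 0)"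
    using assms by (auto simp: constraint_vector_def axis_def intro!: sum.cong)
  also have "\<dots> = (\<Sum>x\<in>UNIV. c (x, j))"
    by (simp add: sum_UNIV_pairs)
  finally show ?thesis .
qed

lemma exists_balanced_matrix_supported:
  fixes F :: "('m::finite \<times> 'n::finite) set" and C :: "'n set"
  assumes "card (fst ` F) + card C < card F"
  shows "\<exists>D :: real^'n^'m. D \<noteq> 0 \<and> (\<forall>x y. (x, y) \<notin> F \<longrightarrow> D $ x $ y = 0)
           \<and> (\<forall>x. (\<Sum>y\<in>UNIV. D $ x $ y) = 0) \<and> (\<forall>j\<in>C. colsum D j = 0)"
proof -
  define B where "B = (\<lambda>x. axis (Inl x) (1::real)) ` fst ` F \<union> (\<lambda>y. axis (Inr y) 1) ` C"
  have "card B \<le> card (fst ` F) + card C"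
    unfolding B_def by (rule order_trans[OF card_Un_le]) (intro add_mono card_image_le; simp)
  then have card_B: "card B < card F" using assms by linarith
  have "constraint_vector C p \<in> span B" if "p \<in> F" for p
  proof -
    have "axis (Inl (fst p)) 1 \<in> span B" using that by (auto simp: B_def intro: span_base)
    moreover have "(if snd p \<in> C then axis (Inr (snd p)) 1 else 0) \<in> span B"
      by (auto simp: B_def intro: span_base span_zero)
    ultimately show ?thesis unfolding constraint_vector_def by (rule span_add)
  qed
  then have "constraint_vector C ` F \<subseteq> span B" by (rule image_subsetI)
  moreover have "finite B" by (simp add: B_def)
  ultimately obtain c where c: "\<forall>p. p \<notin> F \<longrightarrow> c p = 0" "\<exists>p. c p \<noteq> 0"
      "(\<Sum>p\<in>F. c p *\<^sub>R constraint_vector C p) = 0"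
    using exists_vanishing_combination[OF finite _ _ card_B] by metis
  have c0: "(\<Sum>p\<in>UNIV. c p *\<^sub>R constraint_vector C p) = 0"
    using c(1,3) sum.mono_neutral_left[of UNIV F "\<lambda>p. c p *\<^sub>R constraint_vector C p"] by fastforce
  define D :: "real^'n^'m" where "D = (\<chi> x y. c (x, y))"
  have "D \<noteq> 0" using c(2) by (auto simp: D_def vec_eq_iff)
  then show ?thesis
    using c(1) c0 sum_constraint_vector_Inl[of c C] sum_constraint_vector_Inr[of _ C c]
    by (intro exI[of _ D]) (simp add: D_def colsum_def)
qed

definition entry_or_colsum :: "real^'n^'m \<Rightarrow> ('m \<times> 'n) + 'n \<Rightarrow> real" where
  "entry_or_colsum W i = (case i of Inl (x, y) \<Rightarrow> W $ x $ y | Inr j \<Rightarrow> colsum W j)"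

lemma entry_or_colsum_add_scaleR:
  "entry_or_colsum (W + t *\<^sub>R D) i = entry_or_colsum W i + t * entry_or_colsum D i"
  by (simp add: entry_or_colsum_def colsum_add colsum_scaleR split: sum.split)

lemma entry_or_colsum_uminus: "entry_or_colsum (- D) i = - entry_or_colsum D i"
  by (simp add: entry_or_colsum_def colsum_def sum_negf split: sum.split)

definition fractional_positions :: "real^'n^'m \<Rightarrow> ('m \<times> 'n + 'n) set" where
  "fractional_positions W = {i. entry_or_colsum W i \<notin> \<int>}"

definition admissible_direction :: "real^'n^'m \<Rightarrow> real^'n^'m \<Rightarrow> bool" where
  "admissible_direction W D \<longleftrightarrow> D \<noteq> 0 \<and> (\<forall>x. (\<Sum>y\<in>UNIV. D $ x $ y) = 0)
     \<and> (\<forall>i. entry_or_colsum W i \<in> \<int> \<longrightarrow> entry_or_colsum D i = 0)"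

lemma admissible_direction_uminus:
  "admissible_direction W D \<Longrightarrow> admissible_direction W (- D)"
  by (simp add: admissible_direction_def entry_or_colsum_uminus sum_negf)

(* When all column sums are integral, the column constraints sum to the sum of the row
   constraints, so the constraint for the column y0 may be dropped. *)
lemma card_fractional_entries_gt:
  fixes W :: "real^'n^'m"
  assumes W: "is_channel W" and frac: "W $ x0 $ y0 \<notin> \<int>"
  defines "F \<equiv> {(x, y). W $ x $ y \<notin> \<int>}" and "N \<equiv> {j. colsum W j \<notin> \<int>}"
  shows "card (fst ` F) + card (snd ` F - N - (if N = {} then {y0} else {})) < card F"
    (is "_ + card ?C < _")
proof -
  have rows: "card {y. (x, y) \<in> F} \<noteq> 1" for x
    using card_non_Ints_ne_1[of UNIV "\<lambda>y. W $ x $ y"] W by (simp add: F_def is_channel_def)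
  have cols: "card {x. (x, y) \<in> F} \<noteq> 1" if "y \<notin> N" for y
    using card_non_Ints_ne_1[of UNIV "\<lambda>x. W $ x $ y"] that by (simp add: F_def N_def colsum_def)
  have "N \<subseteq> snd ` F"
  proof
    fix j assume "j \<in> N"
    then have "\<not> (\<forall>x. W $ x $ j \<in> \<int>)" by (auto simp: N_def colsum_def intro: Ints_sum)
    then show "j \<in> snd ` F" by (force simp: F_def)
  qed
  with rows cols have count: "2 * card (fst ` F) + 2 * card (snd ` F - N) + card N \<le> 2 * card F"
    by (rule card_rows_cols_le)
  have "(\<Sum>j\<in>UNIV. colsum W j) = real CARD('m)"
    using W by (simp add: sum_colsum is_channel_def)
  then have "card N \<noteq> 1"
    using card_non_Ints_ne_1[of UNIV "colsum W"] by (simp add: N_def)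
  show ?thesis
  proof (cases "N = {}")
    case True
    have "y0 \<in> snd ` F - N" using frac True by (force simp: F_def)
    then have "card ?C + 1 = card (snd ` F - N)"
      using True card_Suc_Diff1[of "snd ` F - N" y0] by simp
    then show ?thesis using count True by simp
  next
    case False
    then have "card N \<noteq> 0" and "card ?C = card (snd ` F - N)" by simp_all
    then show ?thesis using count \<open>card N \<noteq> 1\<close> by linarith
  qed
qed

lemma admissible_direction_exists:
  fixes W :: "real^'n^'m"
  assumes W: "is_channel W" and frac: "W $ x0 $ y0 \<notin> \<int>"
  shows "\<exists>D. admissible_direction W D"
proof -
  define F where "F = {(x, y). W $ x $ y \<notin> \<int>}"
  define N where "N = {j. colsum W j \<notin> \<int>}"
  define C where "C = snd ` F - N - (if N = {} then {y0} else {})"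
  have "card (fst ` F) + card C < card F"
    using card_fractional_entries_gt[OF W frac] by (simp add: F_def N_def C_def)
  then obtain D :: "real^'n^'m" where D: "D \<noteq> 0" "\<forall>x y. (x, y) \<notin> F \<longrightarrow> D $ x $ y = 0"
    "\<forall>x. (\<Sum>y\<in>UNIV. D $ x $ y) = 0" "\<forall>j\<in>C. colsum D j = 0"
    using exists_balanced_matrix_supported by blast
  have col0: "colsum D j = 0" if "j \<in> C \<or> j \<notin> snd ` F" for j
  proof (cases "j \<in> C")
    case False
    then have "\<forall>x. (x, j) \<notin> F" using that by force
    then show ?thesis using D(2) by (simp add: colsum_def)
  qed (use D(4) in blast)
  have "colsum D j = 0" if "j \<notin> N" for j
  proof (cases "j \<in> C \<or> j \<notin> snd ` F")
    case False
    then have N0: "N = {}" and j: "j = y0" using that by (auto simp: C_def split: if_splits)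
    have "(\<Sum>j\<in>UNIV. colsum D j) = 0" using D(3) by (simp add: sum_colsum)
    moreover have "(\<Sum>j\<in>UNIV - {y0}. colsum D j) = 0"
      using col0 N0 by (intro sum.neutral) (auto simp: C_def)
    then have "(\<Sum>j\<in>UNIV. colsum D j) = colsum D y0"
      using sum.remove[of UNIV y0 "colsum D"] by simp
    ultimately show ?thesis using j by simp
  qed (rule col0)
  then have "admissible_direction W D"
    using D(1-3) by (auto simp: admissible_direction_def entry_or_colsum_def F_def N_def split: sum.split)
  then show ?thesis by blast
qed

lemma first_integer_hit:
  fixes a b :: "'i::finite \<Rightarrow> real"
  assumes frac: "\<And>i. b i \<noteq> 0 \<Longrightarrow> a i \<notin> \<int>" and "b i0 \<noteq> 0"
  shows "\<exists>t>0. (\<forall>i. of_int \<lfloor>a i\<rfloor> \<le> a i + t * b i \<and> a i + t * b i \<le> of_int \<lceil>a i\<rceil>)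
               \<and> (\<exists>i. b i \<noteq> 0 \<and> a i + t * b i \<in> \<int>)"
proof -
  define s where "s i = (if b i > 0 then (of_int \<lceil>a i\<rceil> - a i) / b i else (of_int \<lfloor>a i\<rfloor> - a i) / b i)" for i
  have strict: "of_int \<lfloor>a i\<rfloor> < a i \<and> a i < of_int \<lceil>a i\<rceil>" if "b i \<noteq> 0" for i
    using frac[OF that] by (metis Ints_of_int ceiling_correct floor_correct order_less_le)
  have s_pos: "s i > 0" if "b i \<noteq> 0" for i
    using strict[OF that] that by (auto simp: s_def divide_pos_pos divide_neg_neg linorder_neq_iff)
  define t where "t = Min (s ` {i. b i \<noteq> 0})"
  have ne: "{i. b i \<noteq> 0} \<noteq> {}" using assms(2) by blast
  have "t \<in> s ` {i. b i \<noteq> 0}" unfolding t_def using ne by (intro Min_in) auto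
  then obtain i1 where i1: "b i1 \<noteq> 0" "t = s i1" by blast
  have t_le: "t \<le> s i" if "b i \<noteq> 0" for i
    using that by (auto simp: t_def)
  have "t > 0" using s_pos i1 by simp
  moreover have "of_int \<lfloor>a i\<rfloor> \<le> a i + t * b i \<and> a i + t * b i \<le> of_int \<lceil>a i\<rceil>" for i
  proof (cases "b i" "0::real" rule: linorder_cases)
    case less
    then have "t * b i \<ge> of_int \<lfloor>a i\<rfloor> - a i"
      using t_le[of i] by (simp add: s_def neg_le_divide_eq mult.commute)
    moreover have "t * b i \<le> 0" using \<open>t > 0\<close> less by (simp add: mult_nonneg_nonpos)
    ultimately show ?thesis using strict[of i] less by linarith
  next
    case greater
    then have "t * b i \<le> of_int \<lceil>a i\<rceil> - a i"
      using t_le[of i] by (simp add: s_def pos_le_divide_eq mult.commute)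
    moreover have "t * b i \<ge> 0" using \<open>t > 0\<close> greater by simp
    ultimately show ?thesis using strict[of i] greater by linarith
  qed simp
  moreover have "a i1 + t * b i1 \<in> \<int>"
    using i1 by (cases "b i1 > 0") (simp_all add: s_def)
  ultimately show ?thesis using i1(1) by blast
qed

definition rounds_colsums :: "real^'n^'m \<Rightarrow> real^'n^'m \<Rightarrow> bool" where
  "rounds_colsums W D \<longleftrightarrow>
     (\<forall>j. of_int \<lfloor>colsum W j\<rfloor> \<le> colsum D j \<and> colsum D j \<le> of_int \<lceil>colsum W j\<rceil>)"

lemma rounds_colsums_trans:
  assumes "rounds_colsums W W'" and "rounds_colsums W' D"
  shows "rounds_colsums W D"
  unfolding rounds_colsums_def
proof
  fix j
  have "\<lfloor>colsum W j\<rfloor> \<le> \<lfloor>colsum W' j\<rfloor>" "\<lceil>colsum W' j\<rceil> \<le> \<lceil>colsum W j\<rceil>"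
    using assms(1) by (simp_all add: rounds_colsums_def le_floor_iff ceiling_le_iff)
  then show "of_int \<lfloor>colsum W j\<rfloor> \<le> colsum D j \<and> colsum D j \<le> of_int \<lceil>colsum W j\<rceil>"
    using assms(2) unfolding rounds_colsums_def by (meson of_int_le_iff order_trans)
qed

lemma admissible_step:
  fixes W :: "real^'n^'m"
  assumes W: "is_channel W" and D: "admissible_direction W D"
  shows "\<exists>t>0. is_channel (W + t *\<^sub>R D)
           \<and> fractional_positions (W + t *\<^sub>R D) \<subset> fractional_positions W
           \<and> rounds_colsums W (W + t *\<^sub>R D)"
proof -
  obtain x0 y0 where "D $ x0 $ y0 \<noteq> 0" using D by (auto simp: admissible_direction_def vec_eq_iff)
  then have "entry_or_colsum D (Inl (x0, y0)) \<noteq> 0" by (simp add: entry_or_colsum_def)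
  moreover have fixed: "entry_or_colsum D i = 0" if "entry_or_colsum W i \<in> \<int>" for i
    using D that by (auto simp: admissible_direction_def)
  ultimately obtain t where "t > 0"
    and bounds: "\<And>i. of_int \<lfloor>entry_or_colsum W i\<rfloor> \<le> entry_or_colsum (W + t *\<^sub>R D) i
                     \<and> entry_or_colsum (W + t *\<^sub>R D) i \<le> of_int \<lceil>entry_or_colsum W i\<rceil>"
    and hit: "\<exists>i. entry_or_colsum D i \<noteq> 0 \<and> entry_or_colsum (W + t *\<^sub>R D) i \<in> \<int>"
    using first_integer_hit[of "entry_or_colsum D" "entry_or_colsum W"] fixed
    unfolding entry_or_colsum_add_scaleR by blast
  have "0 \<le> (W + t *\<^sub>R D) $ x $ y" for x y
  proof -
    have "(0::real) \<le> of_int \<lfloor>W $ x $ y\<rfloor>" using W by (simp add: is_channel_def)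
    moreover have "of_int \<lfloor>W $ x $ y\<rfloor> \<le> (W + t *\<^sub>R D) $ x $ y"
      using bounds[of "Inl (x, y)"] by (simp add: entry_or_colsum_def)
    ultimately show ?thesis by linarith
  qed
  moreover have "(\<Sum>y\<in>UNIV. (W + t *\<^sub>R D) $ x $ y) = 1" for x
    using W D by (simp add: is_channel_def admissible_direction_def sum.distrib flip: sum_distrib_left)
  moreover have "fractional_positions (W + t *\<^sub>R D) \<subseteq> fractional_positions W"
    using fixed by (auto simp: fractional_positions_def entry_or_colsum_add_scaleR)
  moreover have "fractional_positions (W + t *\<^sub>R D) \<noteq> fractional_positions W"
    using hit fixed unfolding fractional_positions_def by blast
  moreover have "rounds_colsums W (W + t *\<^sub>R D)"
    unfolding rounds_colsums_def
  proof
    fix j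
    show "of_int \<lfloor>colsum W j\<rfloor> \<le> colsum (W + t *\<^sub>R D) j \<and> colsum (W + t *\<^sub>R D) j \<le> of_int \<lceil>colsum W j\<rceil>"
      using bounds[of "Inr j"] by (simp add: entry_or_colsum_def)
  qed
  ultimately show ?thesis using \<open>t > 0\<close> by (auto simp: is_channel_def)
qed

lemma rounding_decomposition_mix:
  assumes "0 < t1" "0 < t2"
    and lam1: "lam1 \<in> Lambda (W + t1 *\<^sub>R D)" "\<forall>E. 0 < lam1 E \<longrightarrow> rounds_colsums W E"
    and lam2: "lam2 \<in> Lambda (W + t2 *\<^sub>R - D)" "\<forall>E. 0 < lam2 E \<longrightarrow> rounds_colsums W E"
  shows "\<exists>lam\<in>Lambda W. \<forall>E. 0 < lam E \<longrightarrow> rounds_colsums W E"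
proof -
  define a where "a = t2 / (t1 + t2)"
  define b where "b = t1 / (t1 + t2)"
  have ab: "0 \<le> a" "0 \<le> b" "a + b = 1"
    using assms(1,2) by (simp_all add: a_def b_def add_divide_distrib[symmetric])
  have "a * t1 = b * t2" unfolding a_def b_def by simp
  have "a *\<^sub>R (W + t1 *\<^sub>R D) + b *\<^sub>R (W + t2 *\<^sub>R - D) = (a + b) *\<^sub>R W + (a * t1 - b * t2) *\<^sub>R D"
    by (simp add: scaleR_add_right scaleR_add_left scaleR_diff_left scaleR_diff_right)
  also have "\<dots> = W" using ab(3) \<open>a * t1 = b * t2\<close> by simp
  finally have "(\<lambda>E. a * lam1 E + b * lam2 E) \<in> Lambda W"
    using Lambda_convex[OF lam1(1) lam2(1) ab] by (simp only:)
  moreover have "rounds_colsums W E" if "0 < a * lam1 E + b * lam2 E" for E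
  proof -
    have "0 < lam1 E \<or> 0 < lam2 E"
    proof (rule ccontr)
      assume "\<not> (0 < lam1 E \<or> 0 < lam2 E)"
      then have "lam1 E = 0" "lam2 E = 0"
        using Lambda_nonneg[OF lam1(1), of E] Lambda_nonneg[OF lam2(1), of E] by linarith+
      then show False using that by simp
    qed
    then show ?thesis using lam1(2) lam2(2) by blast
  qed
  ultimately show ?thesis by (intro bexI[of _ "\<lambda>E. a * lam1 E + b * lam2 E"]) auto
qed

theorem rounding_decomposition_exists:
  fixes W :: "real^'n^'m"
  assumes "is_channel W"
  shows "\<exists>lam\<in>Lambda W. \<forall>D. 0 < lam D \<longrightarrow> rounds_colsums W D"
  using assms
proof (induction "card (fractional_positions W)" arbitrary: W rule: less_induct)
  case less
  show ?case
  proof (cases "\<forall>x y. W $ x $ y \<in> \<int>")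
    case True
    then have "colsum W j \<in> \<int>" for j by (simp add: colsum_def Ints_sum)
    then have "rounds_colsums W W" by (simp add: rounds_colsums_def)
    moreover have "W \<in> det_channels" using less.prems True by (rule integral_channel_in_det_channels)
    then have "(\<lambda>E. if E = W then 1 else 0) \<in> Lambda W" by (rule Lambda_point_mass)
    ultimately show ?thesis by (intro bexI[of _ "\<lambda>E. if E = W then 1 else 0"]) auto
  next
    case False
    then obtain D where D: "admissible_direction W D"
      using admissible_direction_exists less.prems by blast
    have IH: "\<exists>lam\<in>Lambda W'. \<forall>E. 0 < lam E \<longrightarrow> rounds_colsums W E"
      if "is_channel W'" "fractional_positions W' \<subset> fractional_positions W" "rounds_colsums W W'" for W'
      using less.hyps[OF psubset_card_mono[OF _ that(2)] that(1)] rounds_colsums_trans[OF that(3)] by auto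
    obtain t1 where t1: "0 < t1" "is_channel (W + t1 *\<^sub>R D)"
      "fractional_positions (W + t1 *\<^sub>R D) \<subset> fractional_positions W" "rounds_colsums W (W + t1 *\<^sub>R D)"
      using admissible_step[OF less.prems D] by blast
    obtain t2 where t2: "0 < t2" "is_channel (W + t2 *\<^sub>R - D)"
      "fractional_positions (W + t2 *\<^sub>R - D) \<subset> fractional_positions W" "rounds_colsums W (W + t2 *\<^sub>R - D)"
      using admissible_step[OF less.prems admissible_direction_uminus[OF D]] by blast
    obtain lam1 lam2 where "lam1 \<in> Lambda (W + t1 *\<^sub>R D)" "\<forall>E. 0 < lam1 E \<longrightarrow> rounds_colsums W E"
      and "lam2 \<in> Lambda (W + t2 *\<^sub>R - D)" "\<forall>E. 0 < lam2 E \<longrightarrow> rounds_colsums W E"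
      using IH[OF t1(2-4)] IH[OF t2(2-4)] by blast
    then show ?thesis by (intro rounding_decomposition_mix[OF t1(1) t2(1)])
  qed
qed

section \<open>Mixtures of deterministic channels\<close>

lemma sum_weighted_mono:
  fixes w h1 h2 :: "'a \<Rightarrow> real"
  assumes "\<And>a. 0 \<le> w a" "\<And>a. 0 < w a \<Longrightarrow> h1 a \<le> h2 a"
  shows "(\<Sum>a\<in>A. w a * h1 a) \<le> (\<Sum>a\<in>A. w a * h2 a)"
proof (rule sum_mono)
  fix a
  show "w a * h1 a \<le> w a * h2 a"
    using assms[of a] by (cases "w a = 0") (simp_all add: mult_left_mono)
qed

lemma sum_weighted_cong:
  fixes w h1 h2 :: "'a \<Rightarrow> real"
  assumes "\<And>a. 0 \<le> w a" "\<And>a. 0 < w a \<Longrightarrow> h1 a = h2 a"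
  shows "(\<Sum>a\<in>A. w a * h1 a) = (\<Sum>a\<in>A. w a * h2 a)"
  using assms by (intro antisym sum_weighted_mono) auto

lemma sum_weighted_const:
  fixes w :: "'a \<Rightarrow> real"
  shows "sum w A = 1 \<Longrightarrow> (\<Sum>a\<in>A. w a * c) = c"
  by (simp flip: sum_distrib_right)

lemma sum_weighted_affine:
  fixes w h :: "'a \<Rightarrow> real"
  assumes "sum w A = 1"
  shows "(\<Sum>a\<in>A. w a * (c + d * h a)) = c + d * (\<Sum>a\<in>A. w a * h a)"
proof -
  have "(\<Sum>a\<in>A. w a * (c + d * h a)) = c * sum w A + d * (\<Sum>a\<in>A. w a * h a)"
    by (simp add: distrib_left sum.distrib sum_distrib_left mult.left_commute mult.commute)
  then show ?thesis using assms by simp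
qed

lemma sum_Lambda_det_channel: "lam \<in> Lambda W \<Longrightarrow> (\<Sum>f\<in>UNIV. lam (det_channel f)) = 1"
  by (simp add: Lambda_def flip: sum_det_channels)

lemma C11_eq_sum_maps: "C11 lam = (\<Sum>f\<in>UNIV. lam (det_channel f) * log 2 (card (range f)))"
  by (simp add: C11_def sum_det_channels rank_det_channel)

lemma P_lam_eq_sum_maps:
  "P_lam lam r = (\<Sum>f\<in>UNIV. lam (det_channel f) * (if card (range f) = r then 1 else 0))"
proof -
  have "P_lam lam r = (\<Sum>D\<in>det_channels. if rank D = r then lam D else 0)"
    unfolding P_lam_def by (rule sum.inter_filter) (simp add: finite_det_channels)
  then show ?thesis by (simp add: sum_det_channels rank_det_channel if_distrib cong: if_cong)
qed

lemma colsum_eq_sum_maps: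
  assumes "lam \<in> Lambda W"
  shows "colsum W j = (\<Sum>f\<in>UNIV. lam (det_channel f) * card {x. f x = j})"
proof -
  have "colsum W j = (\<Sum>x\<in>UNIV. \<Sum>D\<in>det_channels. lam D * D $ x $ j)"
    using assms by (simp add: Lambda_def colsum_def)
  also have "\<dots> = (\<Sum>D\<in>det_channels. lam D * colsum D j)"
    by (subst sum.swap) (simp add: colsum_def sum_distrib_left)
  finally show ?thesis by (simp add: sum_det_channels colsum_det_channel)
qed

context
  fixes W :: "real^'n^'m" and lam :: "real^'n^'m \<Rightarrow> real"
  assumes lam: "lam \<in> Lambda W"
begin

private lemma weights: "\<And>f. 0 \<le> lam (det_channel f)" "(\<Sum>f\<in>UNIV. lam (det_channel f)) = 1"
  using lam by (simp_all add: Lambda_nonneg sum_Lambda_det_channel)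

lemma P_lam_Lambda_bounds: "0 \<le> P_lam lam r \<and> P_lam lam r \<le> 1"
proof -
  have "0 \<le> P_lam lam r" using lam by (simp add: P_lam_def Lambda_nonneg sum_nonneg)
  moreover have "P_lam lam r \<le> (\<Sum>f\<in>UNIV. lam (det_channel f) * 1)"
    unfolding P_lam_eq_sum_maps by (rule sum_weighted_mono) (simp_all add: weights)
  ultimately show ?thesis by (simp add: weights)
qed

lemma C11_Lambda_le_log_card: "C11 lam \<le> log 2 (min CARD('m) CARD('n))"
proof -
  have "C11 lam \<le> (\<Sum>f\<in>UNIV. lam (det_channel f) * log 2 (min CARD('m) CARD('n)))"
    unfolding C11_eq_sum_maps
  proof (rule sum_weighted_mono)
    fix f :: "'m \<Rightarrow> 'n"
    show "log 2 (card (range f)) \<le> log 2 (min CARD('m) CARD('n))"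
      using card_range_ge_1[of f] card_range_le_CARD_dom[of f] card_range_le_CARD_codom[of f]
      by simp
  qed (simp add: weights)
  then show ?thesis by (simp add: sum_weighted_const[OF weights(2)])
qed

lemma P_lam_1_ge_colsum: "colsum W j - CARD('m) + 1 \<le> P_lam lam 1"
proof -
  have "colsum W j \<le> (\<Sum>f\<in>UNIV. lam (det_channel f) *
          ((real CARD('m) - 1) + 1 * (if card (range f) = 1 then 1 else 0)))"
    unfolding colsum_eq_sum_maps[OF lam]
  proof (rule sum_weighted_mono)
    fix f :: "'m \<Rightarrow> 'n"
    show "real (card {x. f x = j}) \<le> real CARD('m) - 1 + 1 * (if card (range f) = 1 then 1 else 0)"
      using card_fiber_add_card_range_le[of f j] card_range_ge_1[of f]
        card_mono[of UNIV "{x. f x = j}"] by auto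
  qed (simp add: weights)
  then show ?thesis
    unfolding sum_weighted_affine[OF weights(2)] P_lam_eq_sum_maps by simp
qed

lemma C11_le_CARD_minus_colsum: "C11 lam \<le> CARD('m) - colsum W j"
proof -
  have "C11 lam \<le> (\<Sum>f\<in>UNIV. lam (det_channel f) * (real CARD('m) + (-1) * card {x. f x = j}))"
    unfolding C11_eq_sum_maps
  proof (rule sum_weighted_mono)
    fix f :: "'m \<Rightarrow> 'n"
    have "log 2 (card (range f)) \<le> real (card (range f)) - 1"
      using card_range_ge_1 by (rule log2_le_minus_1)
    then show "log 2 (card (range f)) \<le> real CARD('m) + (-1) * card {x. f x = j}"
      using card_fiber_add_card_range_le[of f j] by linarith
  qed (simp add: weights)
  then show ?thesis
    using sum_weighted_affine[OF weights(2), of "real CARD('m)" "-1" "\<lambda>f. card {x. f x = j}"]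
    by (simp add: colsum_eq_sum_maps[OF lam])
qed

lemma C11_eq_if_rank_le_2:
  assumes "\<And>f. 0 < lam (det_channel f) \<Longrightarrow> card (range f) \<le> 2"
  shows "C11 lam = 1 - P_lam lam 1"
proof -
  have "C11 lam = (\<Sum>f\<in>UNIV. lam (det_channel f) * (1 + (-1) * (if card (range f) = 1 then 1 else 0)))"
    unfolding C11_eq_sum_maps
  proof (rule sum_weighted_cong)
    fix f :: "'m \<Rightarrow> 'n" assume "0 < lam (det_channel f)"
    then have "card (range f) = 1 \<or> card (range f) = 2"
      using assms card_range_ge_1[of f] by fastforce
    then show "log 2 (card (range f)) = 1 + (-1) * (if card (range f) = 1 then 1 else 0)"
      by auto
  qed (simp add: weights)
  then show ?thesis
    unfolding sum_weighted_affine[OF weights(2)] P_lam_eq_sum_maps by simp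
qed

lemma C11_le_log_min_bound:
  assumes k: "k = min CARD('m) CARD('n)" "2 \<le> k"
  shows "C11 lam \<le> log 2 (real k - 1) + P_lam lam k * log 2 (real k / (real k - 1))"
proof -
  define L where "L = log 2 (real k / (real k - 1))"
  have "C11 lam \<le> (\<Sum>f\<in>UNIV. lam (det_channel f) *
          (log 2 (real k - 1) + L * (if card (range f) = k then 1 else 0)))"
    unfolding C11_eq_sum_maps
  proof (rule sum_weighted_mono)
    fix f :: "'m \<Rightarrow> 'n"
    have "card (range f) \<le> k"
      using k card_range_le_CARD_dom[of f] card_range_le_CARD_codom[of f] by simp
    moreover have "log 2 (real k) = log 2 (real k - 1) + L"
      unfolding L_def using k(2) by (simp add: log_divide)
    moreover have "log 2 (card (range f)) \<le> log 2 (real k - 1)" if "card (range f) < k"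
      using that card_range_ge_1[of f] by simp
    ultimately show "log 2 (card (range f)) \<le> log 2 (real k - 1) + L * (if card (range f) = k then 1 else 0)"
      by (cases "card (range f) = k") auto
  qed (simp add: weights)
  then show ?thesis
    unfolding sum_weighted_affine[OF weights(2)] P_lam_eq_sum_maps L_def by (simp add: mult.commute)
qed

context
  assumes rounds: "\<And>D. 0 < lam D \<Longrightarrow> rounds_colsums W D"
begin

private lemma fiber_bounds:
  assumes "0 < lam (det_channel f)"
  shows "of_int \<lfloor>colsum W j\<rfloor> \<le> real (card {x. f x = j}) \<and> real (card {x. f x = j}) \<le> of_int \<lceil>colsum W j\<rceil>"
  using rounds[OF assms] by (simp add: rounds_colsums_def colsum_det_channel)

lemma rounding_card_fiber_if_large:
  assumes "real CARD('m) - 1 < colsum W j" "2 \<le> CARD('m)" "0 < lam (det_channel f)"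
  shows "card {x. f x = j} + 1 = CARD('m) + (if card (range f) = 1 then 1 else 0)"
proof (rule card_fiber_if_large[OF _ assms(2)])
  have "int CARD('m) - 1 \<le> \<lfloor>colsum W j\<rfloor>" using assms(1) by (simp add: le_floor_iff)
  then show "CARD('m) \<le> card {x. f x = j} + 1" using fiber_bounds[OF assms(3), of j] by linarith
qed

lemma rounding_P_lam_1:
  assumes "2 \<le> CARD('m)"
  shows "P_lam lam 1 = max 0 (Max (range (colsum W)) - CARD('m) + 1)"
proof -
  obtain j0 where j0: "Max (range (colsum W)) = colsum W j0" using Max_colsum_attained by blast
  show ?thesis
  proof (cases "real CARD('m) - 1 < colsum W j0")
    case True
    have "colsum W j0 = (\<Sum>f\<in>UNIV. lam (det_channel f) *
            (real CARD('m) - 1 + (if card (range f) = 1 then 1 else 0)))"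
      unfolding colsum_eq_sum_maps[OF lam]
    proof (rule sum_weighted_cong)
      fix f :: "'m \<Rightarrow> 'n" assume "0 < lam (det_channel f)"
      from rounding_card_fiber_if_large[OF True assms this]
      show "real (card {x. f x = j0}) = real CARD('m) - 1 + (if card (range f) = 1 then 1 else 0)"
        by (cases "card (range f) = 1") auto
    qed (simp add: weights)
    also have "\<dots> = real CARD('m) - 1 + P_lam lam 1"
      unfolding P_lam_eq_sum_maps using sum_weighted_affine[OF weights(2), of _ 1] by simp
    finally show ?thesis using True j0 by simp
  next
    case False
    have no_const: "card (range f) \<noteq> 1" if "0 < lam (det_channel f)" for f
    proof
      assume "card (range f) = 1"
      then obtain c where "\<And>x. f x = c" by (metis card_range_eq_1_iff)
      then have "card {x. f x = c} = CARD('m)" by simp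
      moreover have "colsum W c \<le> of_int (int CARD('m) - 1)"
        using False j0 Max_ge[of "range (colsum W)" "colsum W c"] by simp
      then have "\<lceil>colsum W c\<rceil> \<le> int CARD('m) - 1" by (simp only: ceiling_le_iff)
      ultimately show False using fiber_bounds[OF that, of c] by linarith
    qed
    have "P_lam lam 1 = (\<Sum>f\<in>UNIV. lam (det_channel f) * 0)"
      unfolding P_lam_eq_sum_maps using no_const by (intro sum_weighted_cong) (simp_all add: weights)
    then show ?thesis using False j0 by simp
  qed
qed

lemma rounding_C11_ge_log_gamma: "log 2 (gamma W) \<le> C11 lam"
proof -
  have "0 \<le> colsum W j" for j
    unfolding colsum_eq_sum_maps[OF lam] by (simp add: weights sum_nonneg)
  then have gamma_le: "gamma W \<le> card (range f)" if "0 < lam (det_channel f)" for f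
    unfolding gamma_def Let_def using fiber_bounds[OF that]
    by (intro card_range_ge_gamma_bound) simp_all
  have "0 < gamma W"
  proof (cases "{j. \<lfloor>colsum W j\<rfloor> \<noteq> 0} = {}")
    case False
    then have "0 < card {j. \<lfloor>colsum W j\<rfloor> \<noteq> 0}" by (simp add: card_gt_0_iff)
    then show ?thesis by (simp add: gamma_def Let_def)
  qed (simp add: gamma_def Let_def)
  have "log 2 (gamma W) = (\<Sum>f\<in>UNIV. lam (det_channel f) * log 2 (gamma W))"
    by (simp add: sum_weighted_const[OF weights(2)])
  also have "\<dots> \<le> C11 lam"
    unfolding C11_eq_sum_maps
  proof (rule sum_weighted_mono)
    fix f :: "'m \<Rightarrow> 'n" assume "0 < lam (det_channel f)"
    then show "log 2 (gamma W) \<le> log 2 (card (range f))"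
      using gamma_le \<open>0 < gamma W\<close> card_range_ge_1[of f] by simp
  qed (simp add: weights)
  finally show ?thesis .
qed

lemma rounding_C11_eq_log_CARD_dom:
  assumes "\<And>j. colsum W j \<le> 1"
  shows "C11 lam = log 2 CARD('m)"
proof -
  have "card (range f) = CARD('m)" if "0 < lam (det_channel f)" for f
  proof (rule card_range_eq_CARD_dom_if_fibers_le_1)
    fix j
    have "\<lceil>colsum W j\<rceil> \<le> 1" using assms[of j] by (simp add: ceiling_le_iff)
    then show "card {x. f x = j} \<le> 1" using fiber_bounds[OF that, of j] by linarith
  qed
  then have "C11 lam = (\<Sum>f\<in>UNIV. lam (det_channel f) * log 2 CARD('m))"
    unfolding C11_eq_sum_maps by (intro sum_weighted_cong) (simp_all add: weights)
  then show ?thesis by (simp add: sum_weighted_const[OF weights(2)])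
qed

lemma rounding_C11_eq_log_CARD_codom:
  assumes "\<And>j. 1 \<le> colsum W j"
  shows "C11 lam = log 2 CARD('n)"
proof -
  have "card (range f) = CARD('n)" if "0 < lam (det_channel f)" for f
  proof (rule card_range_eq_CARD_codom_if_fibers_ge_1)
    fix j
    have "1 \<le> \<lfloor>colsum W j\<rfloor>" using assms[of j] by (simp add: le_floor_iff)
    then show "1 \<le> card {x. f x = j}" using fiber_bounds[OF that, of j] by linarith
  qed
  then have "C11 lam = (\<Sum>f\<in>UNIV. lam (det_channel f) * log 2 CARD('n))"
    unfolding C11_eq_sum_maps by (intro sum_weighted_cong) (simp_all add: weights)
  then show ?thesis by (simp add: sum_weighted_const[OF weights(2)])
qed

end

end

section \<open>Extremal decompositions\<close>

lemma bdd_above_C11_Lambda: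
  fixes W :: "real^'n^'m"
  shows "bdd_above (C11 ` Lambda W)"
  using C11_Lambda_le_log_card[of _ W] by (auto intro!: bdd_aboveI[of _ "log 2 (min CARD('m) CARD('n))"])

lemma C11_le_C11_bar: "lam \<in> Lambda W \<Longrightarrow> C11 lam \<le> C11_bar W"
  unfolding C11_bar_def by (rule cSup_upper) (auto simp: bdd_above_C11_Lambda)

lemma C11_bar_le:
  "Lambda W \<noteq> {} \<Longrightarrow> (\<And>lam. lam \<in> Lambda W \<Longrightarrow> C11 lam \<le> c) \<Longrightarrow> C11_bar W \<le> c"
  unfolding C11_bar_def by (rule cSup_least) auto

lemma C11_bar_eq_C11:
  "lam0 \<in> Lambda W \<Longrightarrow> (\<And>lam. lam \<in> Lambda W \<Longrightarrow> C11 lam \<le> C11 lam0) \<Longrightarrow> C11_bar W = C11 lam0"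
  unfolding C11_bar_def by (rule cSup_eq_maximum) auto

lemma P_lam_le_P_upper: "lam \<in> Lambda W \<Longrightarrow> P_lam lam r \<le> P_upper W r"
  unfolding P_upper_def
  by (rule cSup_upper) (use P_lam_Lambda_bounds in \<open>auto intro!: bdd_aboveI[of _ 1]\<close>)

lemma P_lower_eq_P_lam:
  "lam0 \<in> Lambda W \<Longrightarrow> (\<And>lam. lam \<in> Lambda W \<Longrightarrow> P_lam lam0 r \<le> P_lam lam r) \<Longrightarrow> P_lower W r = P_lam lam0 r"
  unfolding P_lower_def by (rule cInf_eq_minimum) auto

lemma P_lower_1_eq:
  fixes W :: "real^'n^'m"
  assumes W: "is_channel W" and m: "2 \<le> CARD('m)"
  shows "P_lower W 1 = max 0 (Max (range (colsum W)) - CARD('m) + 1)"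
proof -
  obtain lam0 where lam0: "lam0 \<in> Lambda W" and rounds: "\<And>D. 0 < lam0 D \<Longrightarrow> rounds_colsums W D"
    using rounding_decomposition_exists[OF W] by blast
  obtain j0 where j0: "Max (range (colsum W)) = colsum W j0" using Max_colsum_attained by blast
  have "P_lower W 1 = P_lam lam0 1"
  proof (rule P_lower_eq_P_lam[OF lam0])
    fix lam assume "lam \<in> Lambda W"
    then show "P_lam lam0 1 \<le> P_lam lam 1"
      using rounding_P_lam_1[OF lam0 rounds m] P_lam_1_ge_colsum[of lam W j0]
        P_lam_Lambda_bounds[of lam W 1] j0 by simp
  qed
  then show ?thesis using rounding_P_lam_1[OF lam0 rounds m] by simp
qed

lemma C11_bar_eq_1_minus_P_lower:
  fixes W :: "real^'n^'m"
  assumes W: "is_channel W" and m: "2 \<le> CARD('m)"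
    and cond: "0 < P_lower W 1 \<or> CARD('m) = 2 \<or> CARD('n) = 2"
  shows "C11_bar W = 1 - P_lower W 1"
proof -
  obtain lam0 where lam0: "lam0 \<in> Lambda W" and rounds: "\<And>D. 0 < lam0 D \<Longrightarrow> rounds_colsums W D"
    using rounding_decomposition_exists[OF W] by blast
  obtain j0 where j0: "Max (range (colsum W)) = colsum W j0" using Max_colsum_attained by blast
  have P_lower: "P_lower W 1 = max 0 (colsum W j0 - CARD('m) + 1)"
    using P_lower_1_eq[OF W m] j0 by simp
  have small: "card (range f) \<le> 2" if "CARD('m) = 2 \<or> CARD('n) = 2" for f :: "'m \<Rightarrow> 'n"
    using that card_range_le_CARD_dom[of f] card_range_le_CARD_codom[of f] by auto
  have "card (range f) \<le> 2" if "0 < lam0 (det_channel f)" for f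
  proof (cases "real CARD('m) - 1 < colsum W j0")
    case True
    with rounding_card_fiber_if_large[OF lam0 rounds True m that] card_fiber_add_card_range_le[of f j0]
    show ?thesis by (simp split: if_splits)
  next
    case False
    then show ?thesis using cond P_lower small by simp
  qed
  then have "C11 lam0 = 1 - P_lam lam0 1" by (rule C11_eq_if_rank_le_2[OF lam0])
  also have "P_lam lam0 1 = P_lower W 1"
    using rounding_P_lam_1[OF lam0 rounds m] P_lower_1_eq[OF W m] by simp
  finally have C11_lam0: "C11 lam0 = 1 - P_lower W 1" .
  have "C11 lam \<le> 1 - P_lower W 1" if lam: "lam \<in> Lambda W" for lam
  proof (cases "real CARD('m) - 1 < colsum W j0")
    case True
    then show ?thesis using C11_le_CARD_minus_colsum[OF lam, of j0] P_lower by simp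
  next
    case False
    then have "C11 lam = 1 - P_lam lam 1" using cond P_lower small by (intro C11_eq_if_rank_le_2[OF lam]) simp
    then show ?thesis using False P_lower P_lam_Lambda_bounds[OF lam, of 1] by simp
  qed
  then show ?thesis using C11_bar_eq_C11[OF lam0] C11_lam0 by simp
qed

lemma C11_bar_ge_log_gamma:
  assumes "is_channel W"
  shows "log 2 (gamma W) \<le> C11_bar W"
proof -
  obtain lam0 where lam0: "lam0 \<in> Lambda W" and rounds: "\<And>D. 0 < lam0 D \<Longrightarrow> rounds_colsums W D"
    using rounding_decomposition_exists[OF assms] by blast
  show ?thesis
    using rounding_C11_ge_log_gamma[OF lam0 rounds] C11_le_C11_bar[OF lam0] by linarith
qed

lemma C11_bar_le_log_bound:
  fixes W :: "real^'n^'m"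
  assumes W: "is_channel W" and k: "k = min CARD('m) CARD('n)" "2 \<le> k"
  shows "C11_bar W \<le> log 2 (real k - 1) + P_upper W k * log 2 (real k / (real k - 1))"
proof (rule C11_bar_le)
  show "Lambda W \<noteq> {}" using rounding_decomposition_exists[OF W] by blast
next
  fix lam assume lam: "lam \<in> Lambda W"
  have L: "0 \<le> log 2 (real k / (real k - 1))" using k(2) by simp
  have "C11 lam \<le> log 2 (real k - 1) + P_lam lam k * log 2 (real k / (real k - 1))"
    by (rule C11_le_log_min_bound[OF lam k])
  also have "\<dots> \<le> log 2 (real k - 1) + P_upper W k * log 2 (real k / (real k - 1))"
    using mult_right_mono[OF P_lam_le_P_upper[OF lam] L] by simp
  finally show "C11 lam \<le> log 2 (real k - 1) + P_upper W k * log 2 (real k / (real k - 1))" .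
qed

lemma C11_bar_eq_log_CARD_dom:
  fixes W :: "real^'n^'m"
  assumes W: "is_channel W" and "\<And>j. colsum W j \<le> 1"
  shows "C11_bar W = log 2 CARD('m)"
proof -
  obtain lam0 where lam0: "lam0 \<in> Lambda W" and rounds: "\<And>D. 0 < lam0 D \<Longrightarrow> rounds_colsums W D"
    using rounding_decomposition_exists[OF W] by blast
  have "log 2 (min CARD('m) CARD('n)) \<le> log 2 CARD('m)" by simp
  then have "C11 lam \<le> log 2 CARD('m)" if "lam \<in> Lambda W" for lam
    using C11_Lambda_le_log_card[OF that] by linarith
  then show ?thesis using rounding_C11_eq_log_CARD_dom[OF lam0 rounds assms(2)] C11_bar_eq_C11[OF lam0] by simp
qed

lemma C11_bar_eq_log_CARD_codom:
  fixes W :: "real^'n^'m"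
  assumes W: "is_channel W" and "\<And>j. 1 \<le> colsum W j"
  shows "C11_bar W = log 2 CARD('n)"
proof -
  obtain lam0 where lam0: "lam0 \<in> Lambda W" and rounds: "\<And>D. 0 < lam0 D \<Longrightarrow> rounds_colsums W D"
    using rounding_decomposition_exists[OF W] by blast
  have "log 2 (min CARD('m) CARD('n)) \<le> log 2 CARD('n)" by simp
  then have "C11 lam \<le> log 2 CARD('n)" if "lam \<in> Lambda W" for lam
    using C11_Lambda_le_log_card[OF that] by linarith
  then show ?thesis using rounding_C11_eq_log_CARD_codom[OF lam0 rounds assms(2)] C11_bar_eq_C11[OF lam0] by simp
qed

theorem theorem2:
  fixes W :: "real^'n^'m" and m n k :: nat and g :: real
  assumes "m = CARD('m)" and "n = CARD('n)"
    and "m \<ge> 2" and "n \<ge> 2"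
    and "is_channel W"
    and "g = Max (range (colsum W))"
    and "k = min m n"
  shows
     "P_lower W 1 = max 0 (g - real m + 1)
     \<and> ((P_lower W 1 > 0 \<or> m = 2 \<or> n = 2) \<longrightarrow> C11_bar W = 1 - P_lower W 1)
     \<and> (\<not> (P_lower W 1 > 0 \<or> m = 2 \<or> n = 2) \<longrightarrow>
          log 2 (gamma W) \<le> C11_bar W \<and>
          C11_bar W \<le> log 2 (real k - 1) + P_upper W k * log 2 (real k / (real k - 1)))
     \<and> ((m \<le> n \<and> (\<forall>j. colsum W j \<le> 1)) \<longrightarrow> C11_bar W = log 2 (real m))
     \<and> ((m \<ge> n \<and> (\<forall>j. colsum W j \<ge> 1)) \<longrightarrow> C11_bar W = log 2 (real n))"
proof -
  have W: "is_channel W" and m: "2 \<le> CARD('m)" using assms by simp_all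
  have P_lower: "P_lower W 1 = max 0 (g - real m + 1)"
    using P_lower_1_eq[OF W m] assms(1,6) by simp
  show ?thesis
  proof (intro conjI impI)
    assume "P_lower W 1 > 0 \<or> m = 2 \<or> n = 2"
    then show "C11_bar W = 1 - P_lower W 1"
      using C11_bar_eq_1_minus_P_lower[OF W m] assms(1,2) by simp
  next
    show "log 2 (gamma W) \<le> C11_bar W" by (rule C11_bar_ge_log_gamma[OF W])
  next
    show "C11_bar W \<le> log 2 (real k - 1) + P_upper W k * log 2 (real k / (real k - 1))"
      using C11_bar_le_log_bound[OF W] assms(1-4,7) by simp
  next
    assume "m \<le> n \<and> (\<forall>j. colsum W j \<le> 1)"
    then show "C11_bar W = log 2 (real m)" using C11_bar_eq_log_CARD_dom[OF W] assms(1) by simp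
  next
    assume "m \<ge> n \<and> (\<forall>j. colsum W j \<ge> 1)"
    then show "C11_bar W = log 2 (real n)" using C11_bar_eq_log_CARD_codom[OF W] assms(2) by simp
  qed (rule P_lower)
qed

end
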